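(* Let $T$ be a subordinator with Laplace exponent $\phi(\lambda)=b\lambda+\int_{(0,\infty)}(1-e^{-\lambda s})\mu(ds)$, where $b\ge0$ and $\mu$ is the Lévy measure. Assume that $H(\lambda)=\phi(\lambda)-\lambda\phi'(\lambda)$ varies regularly at $0$ (at $\infty$, respectively) with index $\gamma\in[0,1]$. Then \[ \mu(r,\infty)\sim\frac{1}{\Gamma(2-\gamma)}H(r^{-1}),\qquad r\to\infty\ (r\to0,\text{ resp.}). \]
   Context: A subordinator is a non-decreasing Lévy process; $\mathbb{E}e^{-\lambda T_t}=e^{-t\phi(\lambda)}$. The Lévy measure $\mu$ is a measure on $(0,\infty)$ with $\int(1\wedge s)\mu(ds)<\infty$. A function $\ell:(0,\infty)\to(0,\infty)$ varies regularly at $\infty$ (at $0$) with index $\alpha$ if $\ell(\lambda s)/\ell(s)\to\lambda^\alpha$ as $s\to\infty$ ($s\to0$) for every $\lambda>0$. $f(r)\sim g(r)$ means $f(r)/g(r)\to1$. *)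

theory Defs
  imports "HOL-Analysis.Analysis" "HOL-Library.Landau_Symbols"
begin

definition levy_measure :: "real measure \<Rightarrow> bool" where
  "levy_measure mu \<longleftrightarrow> sets mu = sets borel \<and> emeasure mu {..0} = 0 \<and>
     (\<integral>\<^sup>+ s. ennreal (min 1 s) \<partial>mu) < \<infinity>"

definition laplace_exponent :: "real \<Rightarrow> real measure \<Rightarrow> real \<Rightarrow> real" where
  "laplace_exponent b mu lam = b * lam + (\<integral> s. (1 - exp (- lam * s)) \<partial>mu)"

definition regvar_at_top :: "(real \<Rightarrow> real) \<Rightarrow> real \<Rightarrow> bool" where
  "regvar_at_top l a \<longleftrightarrow> (\<forall>s>0. l s > 0) \<and>
     (\<forall>c>0. ((\<lambda>s. l (c * s) / l s) \<longlongrightarrow> c powr a) at_top)"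

definition regvar_at_0 :: "(real \<Rightarrow> real) \<Rightarrow> real \<Rightarrow> bool" where
  "regvar_at_0 l a \<longleftrightarrow> (\<forall>s>0. l s > 0) \<and>
     (\<forall>c>0. ((\<lambda>s. l (c * s) / l s) \<longlongrightarrow> c powr a) (at_right 0))"

end

theory Submission
  imports Defs
begin

text \<open>Differentiating under the integral sign gives \<open>H \<lambda> = \<integral> \<kappa> (\<lambda> s) \<mu>(ds)\<close> with
  \<open>\<kappa> x = 1 - exp (- x) - x exp (- x) = \<integral>\<^sub>0\<^sup>x u exp (- u) du\<close>, and Fubini turns this into
  \<open>H (a / r) = \<integral> \<mu>(r u, \<infinity>) a\<^sup>2 u exp (- a u) du\<close>. Hence the antitone functions
  \<open>G r u = \<mu>(r u, \<infinity>) / H (1 / r)\<close> have Laplace transforms against \<open>u du\<close> equal to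
  \<open>H (l / r) / (l\<^sup>2 H (1 / r))\<close>, which by regular variation tend to \<open>l powr (\<gamma> - 2)\<close>, the
  transform of \<open>u powr (- \<gamma>) / \<Gamma>(2 - \<gamma>)\<close>. A Tauberian argument for monotone densities
  (Weierstrass approximation in the variable \<open>exp (- u)\<close>, then squeezing \<open>G r\<close> between tent
  averages around \<open>u = 1\<close>) then shows that \<open>G r 1\<close> tends to \<open>1 / \<Gamma>(2 - \<gamma>)\<close>.\<close>

section \<open>Differentiation under the integral sign\<close>

lemma has_real_derivative_integral:
  fixes f f' :: "real \<Rightarrow> 'a \<Rightarrow> real" and w :: "'a \<Rightarrow> real"
  assumes x: "x \<in> {a<..<b}"
    and der: "AE s in M. \<forall>t\<in>{a<..<b}. ((\<lambda>t. f t s) has_real_derivative f' t s) (at t)"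
    and bnd: "AE s in M. \<forall>t\<in>{a<..<b}. \<bar>f' t s\<bar> \<le> w s"
    and w: "integrable M w"
    and f: "\<And>t. t \<in> {a<..<b} \<Longrightarrow> integrable M (f t)"
    and f': "f' x \<in> borel_measurable M"
  shows "((\<lambda>t. \<integral>s. f t s \<partial>M) has_real_derivative (\<integral>s. f' x s \<partial>M)) (at x)"
proof -
  have "(\<lambda>n. ((\<integral>s. f (X n) s \<partial>M) - (\<integral>s. f x s \<partial>M)) / (X n - x)) \<longlonglongrightarrow> (\<integral>s. f' x s \<partial>M)"
    if X: "\<forall>n. X n \<in> UNIV - {x}" "X \<longlonglongrightarrow> x" for X
  proof -
    have "eventually (\<lambda>n. X n \<in> {a<..<b}) sequentially"
      using X(2) x by (intro topological_tendstoD) auto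
    then obtain N where N: "\<And>n. n \<ge> N \<Longrightarrow> X n \<in> {a<..<b}"
      by (auto simp: eventually_sequentially)
    define q where "q n s = (f (X (n + N)) s - f x s) / (X (n + N) - x)" for n s
    have XN: "X (n + N) \<in> {a<..<b}" "X (n + N) \<noteq> x" for n
      using N[of "n + N"] X(1) by auto
    have "(\<lambda>n. \<integral>s. q n s \<partial>M) \<longlonglongrightarrow> (\<integral>s. f' x s \<partial>M)"
    proof (rule integral_dominated_convergence[OF f' _ w])
      show "q n \<in> borel_measurable M" for n
        unfolding q_def using f[OF XN(1)] f[OF x]
        by (intro borel_measurable_divide borel_measurable_diff borel_measurable_integrable) auto
      show "AE s in M. (\<lambda>n. q n s) \<longlonglongrightarrow> f' x s"
        using der
      proof eventually_elim
        case (elim s)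
        then have "((\<lambda>y. (f y s - f x s) / (y - x)) \<longlongrightarrow> f' x s) (at x)"
          using x by (simp add: has_field_derivative_iff)
        moreover have "(\<lambda>n. X (n + N)) \<longlonglongrightarrow> x"
          using X(2) by (rule LIMSEQ_ignore_initial_segment)
        ultimately show ?case
          unfolding q_def tendsto_at_iff_sequentially comp_def using XN(2)
          by (metis Diff_iff UNIV_I singletonD)
      qed
      show "AE s in M. norm (q n s) \<le> w s" for n
        using der bnd
      proof eventually_elim
        case (elim s)
        have "norm (f (X (n + N)) s - f x s) \<le> w s * norm (X (n + N) - x)"
          by (rule field_differentiable_bound[of "{a<..<b}"])
             (use elim XN x in \<open>auto intro: has_field_derivative_at_within\<close>)
        then show ?case
          using XN(2) by (simp add: q_def divide_le_eq)
      qed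
    qed
    then have "(\<lambda>n. ((\<integral>s. f (X (n + N)) s \<partial>M) - (\<integral>s. f x s \<partial>M)) / (X (n + N) - x))
        \<longlonglongrightarrow> (\<integral>s. f' x s \<partial>M)"
      unfolding q_def using f[OF XN(1)] f[OF x] by simp
    then show ?thesis by (rule LIMSEQ_offset)
  qed
  then show ?thesis
    unfolding has_field_derivative_iff tendsto_at_iff_sequentially comp_def by blast
qed

section \<open>Levy measures and the function \<open>H\<close>\<close>

definition H_kernel :: "real \<Rightarrow> real" where
  "H_kernel x = 1 - exp (- x) - x * exp (- x)"

lemma H_kernel_nonneg: "0 \<le> H_kernel x"
proof -
  have "(1 + x) * exp (- x) \<le> 1"
    using exp_ge_add_one_self[of x] by (simp add: exp_minus field_simps)
  then show ?thesis by (simp add: H_kernel_def algebra_simps)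
qed

lemma H_kernel_has_integral:
  assumes "a > 0" "y \<ge> 0"
  shows "((\<lambda>u. a\<^sup>2 * u * exp (- a * u)) has_integral H_kernel (a * y)) {0..y}"
proof -
  define G where "G u = - (1 + a * u) * exp (- a * u)" for u
  have "((\<lambda>u. a\<^sup>2 * u * exp (- a * u)) has_integral (G y - G 0)) {0..y}"
  proof (rule fundamental_theorem_of_calculus[OF \<open>y \<ge> 0\<close>])
    fix x assume "x \<in> {0..y}"
    show "(G has_vector_derivative a\<^sup>2 * x * exp (- a * x)) (at x within {0..y})"
      unfolding G_def has_real_derivative_iff_has_vector_derivative[symmetric]
      by (auto intro!: derivative_eq_intros simp: power2_eq_square algebra_simps)
  qed
  also have "G y - G 0 = H_kernel (a * y)"
    unfolding G_def H_kernel_def by (simp add: algebra_simps)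
  finally show ?thesis .
qed

lemma nn_integral_H_kernel:
  assumes "a > 0" "y \<ge> 0"
  shows "(\<integral>\<^sup>+ u. indicator {0..<y} u * ennreal (a\<^sup>2 * u * exp (- a * u)) \<partial>lborel) = ennreal (H_kernel (a * y))"
proof -
  have "(\<integral>\<^sup>+ u. indicator {0..<y} u * ennreal (a\<^sup>2 * u * exp (- a * u)) \<partial>lborel)
      = (\<integral>\<^sup>+ u. ennreal (indicator {0..y} u * (a\<^sup>2 * u * exp (- a * u))) \<partial>lborel)"
    by (rule nn_integral_cong_AE) (use AE_lborel_singleton[of y] in \<open>eventually_elim, auto simp: indicator_def\<close>)
  also have "\<dots> = ennreal (H_kernel (a * y))"
    by (rule nn_integral_has_integral_lebesgue[OF _ H_kernel_has_integral]) (use assms in auto)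
  finally show ?thesis .
qed

locale levy =
  fixes mu :: "real measure"
  assumes levy_measure: "levy_measure mu"
begin

lemma sets_mu [measurable_cong]: "sets mu = sets borel"
  using levy_measure by (simp add: levy_measure_def)

lemma AE_pos: "AE s in mu. 0 < s"
proof (rule AE_I'[of "{..0}"])
  show "{..0} \<in> null_sets mu"
    using levy_measure by (auto simp: levy_measure_def null_sets_def)
qed auto

lemma integrable_min_1: "integrable mu (\<lambda>s. min 1 s)"
  unfolding integrable_iff_bounded
proof
  show "(\<lambda>s. min 1 s) \<in> borel_measurable mu" by measurable
  have "(\<integral>\<^sup>+ s. ennreal (norm (min 1 s :: real)) \<partial>mu) = (\<integral>\<^sup>+ s. ennreal (min 1 s) \<partial>mu)"
    by (rule nn_integral_cong_AE) (use AE_pos in \<open>eventually_elim, auto\<close>)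
  then show "(\<integral>\<^sup>+ s. ennreal (norm (min 1 s :: real)) \<partial>mu) < \<infinity>"
    using levy_measure by (simp add: levy_measure_def)
qed

lemma emeasure_tail_finite:
  assumes "c > 0"
  shows "emeasure mu {c<..} < \<infinity>"
proof -
  have "ennreal (min 1 c) * emeasure mu {c<..} = (\<integral>\<^sup>+ s. ennreal (min 1 c) * indicator {c<..} s \<partial>mu)"
    by (simp add: nn_integral_cmult_indicator)
  also have "\<dots> \<le> (\<integral>\<^sup>+ s. ennreal (min 1 s) \<partial>mu)"
    by (intro nn_integral_mono) (auto simp: indicator_def intro!: ennreal_leI)
  also have "\<dots> < \<infinity>"
    using levy_measure by (simp add: levy_measure_def)
  finally show ?thesis
    using assms by (auto simp: ennreal_mult_less_top top_unique)
qed

lemma sigma_finite_mu: "sigma_finite_measure mu"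
proof
  let ?A = "insert {..0} (range (\<lambda>n::nat. {1 / real (Suc n)<..}))"
  have "\<Union>?A = UNIV"
  proof -
    have "s \<in> \<Union>?A" for s :: real
    proof (cases "s \<le> 0")
      case False
      then obtain n where "1 / real (Suc n) < s"
        by (metis not_le nat_approx_posE)
      then show ?thesis by auto
    qed auto
    then show ?thesis by blast
  qed
  moreover have "\<forall>a\<in>?A. emeasure mu a \<noteq> \<infinity>"
    using levy_measure emeasure_tail_finite by (auto simp: levy_measure_def less_top)
  ultimately show "\<exists>A. countable A \<and> A \<subseteq> sets mu \<and> \<Union> A = space mu \<and> (\<forall>a\<in>A. emeasure mu a \<noteq> \<infinity>)"
    by (intro exI[of _ ?A]) (auto simp: sets_mu sets_eq_imp_space_eq[OF sets_mu])
qed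

lemma integrable_one_minus_exp:
  assumes "l > 0"
  shows "integrable mu (\<lambda>s. 1 - exp (- l * s))"
proof (rule Bochner_Integration.integrable_bound)
  show "integrable mu (\<lambda>s. max 1 l * min 1 s)" using integrable_min_1 by simp
  show "AE s in mu. norm (1 - exp (- l * s)) \<le> norm (max 1 l * min 1 s)"
    using AE_pos
  proof eventually_elim
    case (elim s)
    have "1 - l * s \<le> exp (- l * s)" using exp_ge_add_one_self[of "- l * s"] by simp
    moreover have "l * s \<le> max 1 l * s" using elim by (intro mult_right_mono) auto
    ultimately have "1 - exp (- l * s) \<le> max 1 l * min 1 s"
      by (cases "s \<le> 1") (auto simp: min_def intro: order_trans[of _ 1] less_imp_le)
    then show ?case using assms elim by (simp add: abs_of_nonneg)
  qed
qed measurable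

lemma integrable_mult_exp:
  assumes "l > 0"
  shows "integrable mu (\<lambda>s. s * exp (- l * s))"
proof (rule Bochner_Integration.integrable_bound)
  show "integrable mu (\<lambda>s. max 1 (1 / l) * min 1 s)" using integrable_min_1 by simp
  show "AE s in mu. norm (s * exp (- l * s)) \<le> norm (max 1 (1 / l) * min 1 s)"
    using AE_pos
  proof eventually_elim
    case (elim s)
    have "l * s \<le> exp (l * s)" using exp_ge_add_one_self[of "l * s"] by linarith
    then have "s * exp (- l * s) \<le> 1 / l" using assms by (simp add: exp_minus field_simps)
    moreover have "s * exp (- l * s) \<le> s" using assms elim by (simp add: mult_le_cancel_left1)
    moreover have "s \<le> max 1 (1 / l) * s" using elim by (simp add: mult_le_cancel_right1)
    ultimately have "s * exp (- l * s) \<le> max 1 (1 / l) * min 1 s"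
      by (auto simp: min_def)
    then show ?case using elim by (simp add: abs_of_nonneg)
  qed
qed measurable

lemma laplace_exponent_has_derivative:
  assumes l: "l > 0"
  shows "(laplace_exponent b mu has_real_derivative (b + (\<integral>s. s * exp (- l * s) \<partial>mu))) (at l)"
proof -
  have "((\<lambda>t. \<integral>s. 1 - exp (- t * s) \<partial>mu) has_real_derivative (\<integral>s. s * exp (- l * s) \<partial>mu)) (at l)"
  proof (rule has_real_derivative_integral[where a="l/2" and b="2*l" and w="\<lambda>s. s * exp (- (l/2) * s)"])
    show "AE s in mu. \<forall>t\<in>{l/2<..<2*l}. ((\<lambda>t. 1 - exp (- t * s)) has_real_derivative s * exp (- t * s)) (at t)"
      by (intro AE_I2 ballI) (auto intro!: derivative_eq_intros)
    show "AE s in mu. \<forall>t\<in>{l/2<..<2*l}. \<bar>s * exp (- t * s)\<bar> \<le> s * exp (- (l/2) * s)"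
      using AE_pos by eventually_elim (auto simp: abs_of_nonneg intro!: mult_left_mono)
    show "integrable mu (\<lambda>s. 1 - exp (- t * s))" if "t \<in> {l/2<..<2*l}" for t
      using integrable_one_minus_exp[of t] that l by simp
  qed (use l integrable_mult_exp[of "l/2"] in auto)
  from DERIV_add[OF DERIV_cmult[OF DERIV_ident, of b] this] show ?thesis
    unfolding laplace_exponent_def by simp
qed

definition levy_H :: "real \<Rightarrow> real" where
  "levy_H l = (\<integral>s. H_kernel (l * s) \<partial>mu)"

lemma integrable_H_kernel:
  assumes "l > 0"
  shows "integrable mu (\<lambda>s. H_kernel (l * s))"
proof -
  have "integrable mu (\<lambda>s. (1 - exp (- l * s)) - l * (s * exp (- l * s)))"
    using integrable_one_minus_exp[OF assms] integrable_mult_exp[OF assms] by simp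
  then show ?thesis by (simp add: H_kernel_def mult.assoc)
qed

lemma levy_H_nonneg: "l > 0 \<Longrightarrow> 0 \<le> levy_H l"
  unfolding levy_H_def
  by (rule integral_nonneg_AE) (use AE_pos in \<open>eventually_elim, auto simp: H_kernel_nonneg\<close>)

lemma laplace_exponent_minus_deriv:
  assumes l: "l > 0"
  shows "laplace_exponent b mu l - l * deriv (laplace_exponent b mu) l = levy_H l"
proof -
  have "levy_H l = (\<integral>s. (1 - exp (- l * s)) - l * (s * exp (- l * s)) \<partial>mu)"
    unfolding levy_H_def H_kernel_def by (simp add: mult.assoc)
  also have "\<dots> = (\<integral>s. 1 - exp (- l * s) \<partial>mu) - l * (\<integral>s. s * exp (- l * s) \<partial>mu)"
    using integrable_one_minus_exp[OF l] integrable_mult_exp[OF l] by simp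
  finally show ?thesis
    unfolding DERIV_imp_deriv[OF laplace_exponent_has_derivative[OF l]] laplace_exponent_def
    by (simp add: algebra_simps)
qed

definition tail :: "real \<Rightarrow> real" where
  "tail x = indicator {0<..} x * measure mu {x<..}"

lemma tail_nonneg: "0 \<le> tail x"
  by (simp add: tail_def)

lemma tail_nonpos: "x \<le> 0 \<Longrightarrow> tail x = 0"
  by (simp add: tail_def)

lemma measure_tail_antimono:
  assumes "0 < x" "x \<le> y"
  shows "measure mu {y<..} \<le> measure mu {x<..}"
  using assms emeasure_tail_finite[of x]
  by (intro measure_mono_fmeasurable) (auto simp: fmeasurable_def sets_mu)

lemma antimono_on_tail: "antimono_on {0<..} tail"
  by (rule monotone_onI) (simp add: tail_def measure_tail_antimono)

lemma borel_measurable_tail [measurable]: "tail \<in> borel_measurable borel"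
proof -
  have "mono_on {0<..} (\<lambda>x. - measure mu {x<..})"
    by (rule monotone_onI) (simp add: measure_tail_antimono)
  then have "(\<lambda>x. - measure mu {x<..}) \<in> borel_measurable (restrict_space borel {0<..})"
    by (rule borel_measurable_mono_on_fnc)
  then have "(\<lambda>x. indicator {0<..} x *\<^sub>R (- measure mu {x<..})) \<in> borel_measurable borel"
    by (subst (asm) borel_measurable_restrict_space_iff) auto
  then have "(\<lambda>x. - (indicator {0<..} x *\<^sub>R (- measure mu {x<..}))) \<in> borel_measurable borel"
    by (rule borel_measurable_uminus)
  then show ?thesis
    unfolding tail_def by simp
qed

lemma nn_integral_tail_kernel:
  assumes r: "r > 0" and a: "a > 0"
  shows "(\<integral>\<^sup>+ u. ennreal (tail (r * u) * (a\<^sup>2 * u * exp (- a * u))) \<partial>lborel) = ennreal (levy_H (a / r))"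
proof -
  interpret sigma_finite_measure mu by (rule sigma_finite_mu)
  interpret P: pair_sigma_finite mu lborel
    unfolding pair_sigma_finite_def using sigma_finite_mu lborel.sigma_finite_measure_axioms by auto
  define k where "k u = a\<^sup>2 * u * exp (- a * u)" for u :: real
  define S where "S = {p :: real \<times> real. 0 \<le> snd p \<and> r * snd p < fst p}"
  have S_meas: "S \<in> sets (borel \<Otimes>\<^sub>M borel)"
  proof -
    have "S = {p \<in> space (borel \<Otimes>\<^sub>M borel). 0 \<le> snd p \<and> r * snd p < fst p}"
      by (simp add: space_pair_measure S_def)
    also have "\<dots> \<in> sets (borel \<Otimes>\<^sub>M borel)" by measurable
    finally show ?thesis .
  qed
  have "ennreal (levy_H (a / r)) = (\<integral>\<^sup>+ s. ennreal (H_kernel (a / r * s)) \<partial>mu)"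
    unfolding levy_H_def
    by (rule nn_integral_eq_integral[symmetric]) (use integrable_H_kernel[of "a/r"] a r in \<open>auto simp: H_kernel_nonneg\<close>)
  also have "\<dots> = (\<integral>\<^sup>+ s. (\<integral>\<^sup>+ u. indicator S (s, u) * ennreal (k u) \<partial>lborel) \<partial>mu)"
  proof (rule nn_integral_cong_AE)
    have S_slice: "indicator S (s, u) = (indicator {0..<s / r} u :: ennreal)" for s u
      using r by (auto simp: S_def indicator_def field_simps)
    show "AE s in mu. ennreal (H_kernel (a / r * s)) = (\<integral>\<^sup>+ u. indicator S (s, u) * ennreal (k u) \<partial>lborel)"
      using AE_pos
    proof eventually_elim
      case (elim s)
      then show ?case
        using nn_integral_H_kernel[of a "s / r"] a r by (simp add: S_slice k_def mult.commute)
    qed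
  qed
  also have "\<dots> = (\<integral>\<^sup>+ u. (\<integral>\<^sup>+ s. indicator S (s, u) * ennreal (k u) \<partial>mu) \<partial>lborel)"
  proof (rule P.Fubini'[symmetric])
    have "(\<lambda>p. indicator S p * ennreal (k (snd p))) \<in> borel_measurable (borel \<Otimes>\<^sub>M borel)"
      unfolding k_def using S_meas by measurable
    then show "case_prod (\<lambda>s u. indicator S (s, u) * ennreal (k u)) \<in> borel_measurable (mu \<Otimes>\<^sub>M lborel)"
      by (subst measurable_cong_sets[OF sets_pair_measure_cong[OF sets_mu sets_lborel] refl])
         (simp add: case_prod_beta')
  qed
  also have "\<dots> = (\<integral>\<^sup>+ u. ennreal (tail (r * u) * k u) \<partial>lborel)"
  proof (rule nn_integral_cong)
    fix u :: real
    have "(\<integral>\<^sup>+ s. indicator S (s, u) * ennreal (k u) \<partial>mu)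
        = (\<integral>\<^sup>+ s. (ennreal (k u) * indicator {0..} u) * indicator {r * u<..} s \<partial>mu)"
      by (intro nn_integral_cong) (auto simp: S_def indicator_def)
    also have "\<dots> = ennreal (k u) * indicator {0..} u * emeasure mu {r * u<..}"
      by (simp add: nn_integral_cmult_indicator)
    also have "\<dots> = ennreal (tail (r * u) * k u)"
    proof (cases "u > 0")
      case True
      then have "emeasure mu {r * u<..} = ennreal (measure mu {r * u<..})" "k u \<ge> 0"
        using emeasure_tail_finite[of "r * u"] r by (auto simp: k_def emeasure_eq_ennreal_measure)
      then show ?thesis
        using True r by (simp add: tail_def ennreal_mult' mult.commute)
    next
      case False
      then show ?thesis
        using r by (auto simp: tail_def indicator_def k_def mult_pos_pos zero_less_mult_iff)
    qed
    finally show "(\<integral>\<^sup>+ s. indicator S (s, u) * ennreal (k u) \<partial>mu) = ennreal (tail (r * u) * k u)" .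
  qed
  finally show ?thesis
    unfolding k_def by simp
qed

lemma has_bochner_integral_tail_kernel:
  assumes "r > 0" "a > 0"
  shows "has_bochner_integral lborel (\<lambda>u. tail (r * u) * (a\<^sup>2 * u * exp (- a * u))) (levy_H (a / r))"
proof -
  have "(\<lambda>u. tail (r * u) * (a\<^sup>2 * u * exp (- a * u))) \<in> borel_measurable lborel"
    by measurable
  moreover have "AE u in lborel. 0 \<le> tail (r * u) * (a\<^sup>2 * u * exp (- a * u))"
    by (intro AE_I2) (use assms in \<open>auto simp: tail_def indicator_def zero_less_mult_iff\<close>)
  moreover have "0 \<le> levy_H (a / r)"
    using assms by (simp add: levy_H_nonneg)
  ultimately show ?thesis
    using nn_integral_tail_kernel[OF assms]
    by (simp add: has_bochner_integral_iff nn_integral_eq_integrable)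
qed

end

section \<open>A Tauberian theorem for monotone densities\<close>

definition admissible_density :: "(real \<Rightarrow> real) \<Rightarrow> bool" where
  "admissible_density h \<longleftrightarrow> (\<forall>u. 0 \<le> h u) \<and> (\<forall>u\<le>0. h u = 0) \<and> h \<in> borel_measurable borel
     \<and> (\<forall>l>0. integrable lborel (\<lambda>u. h u * u * exp (- l * u)))"

definition laplace_functional :: "(real \<Rightarrow> real) \<Rightarrow> (real \<Rightarrow> real) \<Rightarrow> real" where
  "laplace_functional h c = (\<integral>u. h u * u * exp (- u) * c (exp (- u)) \<partial>lborel)"

lemma admissible_densityD:
  assumes "admissible_density h"
  shows "0 \<le> h u" "u \<le> 0 \<Longrightarrow> h u = 0" "h \<in> borel_measurable borel"
    "l > 0 \<Longrightarrow> integrable lborel (\<lambda>u. h u * u * exp (- l * u))"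
  using assms unfolding admissible_density_def by blast+

lemma admissible_density_nonneg_weight:
  assumes "admissible_density h"
  shows "0 \<le> h u * u * exp (- u)"
  using admissible_densityD(1,2)[OF assms, of u] by (cases "u \<le> 0") auto

lemma integrable_laplace_functional:
  assumes h: "admissible_density h" and c: "c \<in> borel_measurable borel"
    and B: "\<forall>y\<in>{0..1}. \<bar>c y\<bar> \<le> B"
  shows "integrable lborel (\<lambda>u. h u * u * exp (- u) * c (exp (- u)))"
proof (rule Bochner_Integration.integrable_bound)
  show "integrable lborel (\<lambda>u. B * (h u * u * exp (- 1 * u)))"
    using admissible_densityD(4)[OF h, of 1] by simp
  show "(\<lambda>u. h u * u * exp (- u) * c (exp (- u))) \<in> borel_measurable lborel"
    using admissible_densityD(3)[OF h] c by measurable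
  show "AE u in lborel. norm (h u * u * exp (- u) * c (exp (- u))) \<le> norm (B * (h u * u * exp (- 1 * u)))"
  proof (intro AE_I2)
    fix u :: real
    show "norm (h u * u * exp (- u) * c (exp (- u))) \<le> norm (B * (h u * u * exp (- 1 * u)))"
    proof (cases "u \<le> 0")
      case False
      then have "exp (- u) \<in> {0..1}" by auto
      then have "\<bar>c (exp (- u))\<bar> \<le> \<bar>B\<bar>" using B by fastforce
      then show ?thesis
        by (simp add: abs_mult mult.commute mult_right_mono)
    qed (simp add: admissible_densityD(2)[OF h])
  qed
qed

lemma laplace_functional_diff_le:
  assumes h: "admissible_density h" and c: "c \<in> borel_measurable borel" and d: "d \<in> borel_measurable borel"
    and Bc: "\<forall>y\<in>{0..1}. \<bar>c y\<bar> \<le> B" and Bd: "\<forall>y\<in>{0..1}. \<bar>d y\<bar> \<le> B'"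
    and cd: "\<forall>y\<in>{0..1}. \<bar>c y - d y\<bar> \<le> e"
  shows "\<bar>laplace_functional h c - laplace_functional h d\<bar> \<le> e * laplace_functional h (\<lambda>_. 1)"
proof -
  let ?w = "\<lambda>u. h u * u * exp (- u)"
  have ic: "integrable lborel (\<lambda>u. ?w u * c (exp (- u)))"
    by (rule integrable_laplace_functional[OF h c Bc])
  have id: "integrable lborel (\<lambda>u. ?w u * d (exp (- u)))"
    by (rule integrable_laplace_functional[OF h d Bd])
  have "\<bar>laplace_functional h c - laplace_functional h d\<bar>
      = \<bar>\<integral>u. ?w u * c (exp (- u)) - ?w u * d (exp (- u)) \<partial>lborel\<bar>"
    unfolding laplace_functional_def using ic id by simp
  also have "\<dots> \<le> (\<integral>u. norm (?w u * c (exp (- u)) - ?w u * d (exp (- u))) \<partial>lborel)"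
    using integral_norm_bound[of lborel "\<lambda>u. ?w u * c (exp (- u)) - ?w u * d (exp (- u))"]
    by (simp only: real_norm_def)
  also have "\<dots> \<le> (\<integral>u. e * (?w u * 1) \<partial>lborel)"
  proof (rule integral_mono)
    show "integrable lborel (\<lambda>u. norm (?w u * c (exp (- u)) - ?w u * d (exp (- u))))"
      using ic id by auto
    show "integrable lborel (\<lambda>u. e * (?w u * 1))"
      using admissible_densityD(4)[OF h, of 1] by simp
    fix u :: real
    have w: "0 \<le> ?w u" by (rule admissible_density_nonneg_weight[OF h])
    have "norm (?w u * c (exp (- u)) - ?w u * d (exp (- u))) = ?w u * \<bar>c (exp (- u)) - d (exp (- u))\<bar>"
      using w by (metis abs_mult abs_of_nonneg real_norm_def right_diff_distrib)
    also have "\<dots> \<le> ?w u * e"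
    proof (cases "u \<le> 0")
      case False
      then have "exp (- u) \<in> {0..1}" by auto
      then show ?thesis using cd w by (intro mult_left_mono) auto
    qed (simp add: admissible_densityD(2)[OF h])
    finally show "norm (?w u * c (exp (- u)) - ?w u * d (exp (- u))) \<le> e * (?w u * 1)"
      by (simp add: mult.commute)
  qed
  also have "\<dots> = e * laplace_functional h (\<lambda>_. 1)"
    unfolding laplace_functional_def by simp
  finally show ?thesis .
qed

lemma laplace_functional_monomial:
  "laplace_functional h (\<lambda>y. y ^ k) = (\<integral>u. h u * u * exp (- (real k + 1) * u) \<partial>lborel)"
proof -
  have "exp (- u) * exp (- u) ^ k = exp (- (real k + 1) * u)" for u
    by (simp add: exp_of_nat_mult[symmetric] exp_add[symmetric] algebra_simps)
  then show ?thesis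
    unfolding laplace_functional_def by (simp add: mult.assoc)
qed

lemma laplace_functional_polynomial:
  assumes h: "admissible_density h"
  shows "laplace_functional h (\<lambda>y. \<Sum>i\<le>n. a i * y ^ i) = (\<Sum>i\<le>n. a i * laplace_functional h (\<lambda>y. y ^ i))"
proof -
  let ?w = "\<lambda>u. h u * u * exp (- u)"
  have "laplace_functional h (\<lambda>y. \<Sum>i\<le>n. a i * y ^ i)
      = (\<integral>u. (\<Sum>i\<le>n. a i * (?w u * exp (- u) ^ i)) \<partial>lborel)"
    unfolding laplace_functional_def sum_distrib_left
    by (intro Bochner_Integration.integral_cong refl sum.cong) (simp only: mult.left_commute)
  also have "\<dots> = (\<Sum>i\<le>n. (\<integral>u. a i * (?w u * exp (- u) ^ i) \<partial>lborel))"
  proof (rule Bochner_Integration.integral_sum)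
    fix i
    have "integrable lborel (\<lambda>u. ?w u * exp (- u) ^ i)"
      by (rule integrable_laplace_functional[OF h, of _ 1]) (auto simp: power_le_one)
    then show "integrable lborel (\<lambda>u. a i * (?w u * exp (- u) ^ i))" by simp
  qed
  also have "\<dots> = (\<Sum>i\<le>n. a i * laplace_functional h (\<lambda>y. y ^ i))"
    by (simp add: laplace_functional_def)
  finally show ?thesis .
qed

lemma laplace_functional_nonneg:
  assumes h: "admissible_density h" and c: "\<forall>y\<in>{0..1}. 0 \<le> c y"
  shows "0 \<le> laplace_functional h c"
  unfolding laplace_functional_def
proof (rule Bochner_Integration.integral_nonneg)
  fix u :: real
  show "0 \<le> h u * u * exp (- u) * c (exp (- u))"
  proof (cases "u \<le> 0")
    case False
    then show ?thesis
      using c admissible_density_nonneg_weight[OF h, of u] by simp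
  qed (simp add: admissible_densityD(2)[OF h])
qed

definition tent :: "real \<Rightarrow> real \<Rightarrow> real \<Rightarrow> real" where
  "tent a b u = max 0 (min (u - a) (b - u))"

text \<open>The tent on \<open>[a, b]\<close> transported to \<open>[0, 1]\<close> by \<open>y = exp (- u)\<close>; the \<open>max\<close> makes it
  continuous on all of \<open>\<real>\<close>, so that Weierstrass approximation applies.\<close>
definition exp_tent :: "real \<Rightarrow> real \<Rightarrow> real \<Rightarrow> real" where
  "exp_tent a b y = tent a b (- ln (max y (exp (- b))))"

definition tent_weight :: "real \<Rightarrow> real \<Rightarrow> real" where
  "tent_weight a b = (\<integral>u. u * exp (- u) * tent a b u \<partial>lborel)"

lemma tent_nonneg: "0 \<le> tent a b u"
  by (simp add: tent_def)

lemma tent_le: "a \<le> b \<Longrightarrow> tent a b u \<le> b - a"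
  by (auto simp: tent_def)

lemma tent_outside: "u \<notin> {a..b} \<Longrightarrow> tent a b u = 0"
  by (auto simp: tent_def)

lemma exp_tent_exp:
  assumes "a < b"
  shows "exp_tent a b (exp (- u)) = tent a b u"
proof (cases "u \<le> b")
  case False
  then have "exp_tent a b (exp (- u)) = tent a b b"
    by (simp add: exp_tent_def max_def)
  also have "\<dots> = tent a b u"
    using assms False by (simp add: tent_def tent_outside)
  finally show ?thesis .
qed (simp add: exp_tent_def max_def)

lemma continuous_on_exp_tent: "continuous_on UNIV (exp_tent a b)"
proof -
  have "continuous_on UNIV (\<lambda>y. ln (max y (exp (- b))))"
    by (intro continuous_intros) (auto simp: max_def)
  then show ?thesis
    unfolding exp_tent_def tent_def by (intro continuous_intros) (auto simp: max_def)
qed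

lemma borel_measurable_exp_tent [measurable]: "exp_tent a b \<in> borel_measurable borel"
  by (rule borel_measurable_continuous_onI[OF continuous_on_exp_tent])

lemma exp_tent_bound: "a \<le> b \<Longrightarrow> \<forall>y\<in>{0..1}. \<bar>exp_tent a b y\<bar> \<le> b - a"
  by (simp add: exp_tent_def tent_nonneg tent_le)

lemma integrable_tent_weight:
  assumes ab: "0 < a" "a < b"
  shows "integrable lborel (\<lambda>u. u * exp (- u) * tent a b u)"
proof (rule Bochner_Integration.integrable_bound)
  show "integrable lborel (\<lambda>u. (b * (b - a)) * indicator {a..b} u)"
    by (intro integrable_mult_right integrable_real_indicator) (auto simp: emeasure_lborel_Icc_eq)
  show "(\<lambda>u. u * exp (- u) * tent a b u) \<in> borel_measurable lborel"
    unfolding tent_def by measurable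
  show "AE u in lborel. norm (u * exp (- u) * tent a b u) \<le> norm (b * (b - a) * indicator {a..b} u)"
  proof (intro AE_I2)
    fix u :: real
    show "norm (u * exp (- u) * tent a b u) \<le> norm (b * (b - a) * indicator {a..b} u)"
    proof (cases "u \<in> {a..b}")
      case True
      then have "u * exp (- u) \<le> b * 1"
        using ab by (intro mult_mono) auto
      moreover have "tent a b u \<le> b - a"
        using ab by (simp add: tent_le)
      ultimately have "u * exp (- u) * tent a b u \<le> b * (b - a)"
        using True ab tent_nonneg[of a b u] by (intro mult_mono) auto
      then show ?thesis
        using True ab tent_nonneg[of a b u] by simp
    qed (simp add: tent_outside)
  qed
qed

lemma tent_weight_pos:
  assumes ab: "0 < a" "a < b"
  shows "tent_weight a b > 0"
proof -
  define d where "d = (b - a) / 4"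
  define m where "m = a * exp (- b) * d"
  have d: "d > 0" and m: "m > 0" and le: "a + d < b - d"
    using ab by (simp_all add: d_def m_def field_simps)
  have "0 < m * ((b - d) - (a + d))"
    using m le by simp
  also have "\<dots> = (\<integral>u. m * indicator {a + d..b - d} u \<partial>lborel)"
    using le by simp
  also have "\<dots> \<le> tent_weight a b"
    unfolding tent_weight_def
  proof (rule integral_mono)
    show "integrable lborel (\<lambda>u. m * indicator {a + d..b - d} u)"
      by (intro integrable_mult_right integrable_real_indicator) (auto simp: emeasure_lborel_Icc_eq)
    show "integrable lborel (\<lambda>u. u * exp (- u) * tent a b u)"
      by (rule integrable_tent_weight[OF ab])
    fix u :: real
    show "m * indicator {a + d..b - d} u \<le> u * exp (- u) * tent a b u"
    proof (cases "u \<in> {a + d..b - d}")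
      case True
      then have "a * exp (- b) \<le> u * exp (- u)" "d \<le> tent a b u"
        using ab d by (auto simp: tent_def intro!: mult_mono)
      then show ?thesis
        using True ab d by (simp add: m_def mult_mono)
    next
      case False
      have "0 \<le> u * exp (- u) * tent a b u"
        using ab by (cases "u \<in> {a..b}") (auto simp: tent_nonneg tent_outside)
      then show ?thesis using False by simp
    qed
  qed
  finally show ?thesis .
qed

lemma laplace_functional_exp_tent:
  assumes "a < b"
  shows "laplace_functional h (exp_tent a b) = (\<integral>u. h u * (u * exp (- u) * tent a b u) \<partial>lborel)"
  unfolding laplace_functional_def exp_tent_exp[OF assms] by (simp add: mult_ac)

lemma integrable_exp_tent:
  assumes h: "admissible_density h" and ab: "a < b"
  shows "integrable lborel (\<lambda>u. h u * (u * exp (- u) * tent a b u))"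
proof -
  have "integrable lborel (\<lambda>u. h u * u * exp (- u) * exp_tent a b (exp (- u)))"
    using ab by (intro integrable_laplace_functional[OF h borel_measurable_exp_tent exp_tent_bound]) simp
  then show ?thesis
    by (simp add: exp_tent_exp[OF ab] mult_ac)
qed

lemma laplace_functional_exp_tent_le:
  assumes h: "admissible_density h" and ab: "0 < a" "a < b"
    and k: "\<And>u. u \<in> {a..b} \<Longrightarrow> h u \<le> k"
  shows "laplace_functional h (exp_tent a b) \<le> k * tent_weight a b"
  unfolding laplace_functional_exp_tent[OF ab(2)] tent_weight_def integral_mult_right_zero[symmetric]
proof (rule integral_mono)
  fix u :: real
  show "h u * (u * exp (- u) * tent a b u) \<le> k * (u * exp (- u) * tent a b u)"
    using ab k[of u] by (cases "u \<in> {a..b}") (auto simp: tent_outside tent_nonneg intro!: mult_right_mono)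
qed (use integrable_exp_tent[OF h ab(2)] integrable_tent_weight[OF ab] in auto)

lemma laplace_functional_exp_tent_ge:
  assumes h: "admissible_density h" and ab: "0 < a" "a < b"
    and k: "\<And>u. u \<in> {a..b} \<Longrightarrow> k \<le> h u"
  shows "k * tent_weight a b \<le> laplace_functional h (exp_tent a b)"
  unfolding laplace_functional_exp_tent[OF ab(2)] tent_weight_def integral_mult_right_zero[symmetric]
proof (rule integral_mono)
  fix u :: real
  show "k * (u * exp (- u) * tent a b u) \<le> h u * (u * exp (- u) * tent a b u)"
    using ab k[of u] by (cases "u \<in> {a..b}") (auto simp: tent_outside tent_nonneg intro!: mult_right_mono)
qed (use integrable_exp_tent[OF h ab(2)] integrable_tent_weight[OF ab] in auto)

locale monotone_tauberian =
  fixes F :: "real filter" and G :: "real \<Rightarrow> real \<Rightarrow> real" and g :: "real \<Rightarrow> real"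
  assumes eventually_admissible: "\<forall>\<^sub>F r in F. admissible_density (G r)"
    and eventually_antimono: "\<forall>\<^sub>F r in F. antimono_on {0<..} (G r)"
    and admissible_g: "admissible_density g"
    and antimono_g: "antimono_on {0<..} g"
    and isCont_g: "isCont g 1"
    and tendsto_laplace: "\<And>l. l > 0 \<Longrightarrow> ((\<lambda>r. \<integral>u. G r u * u * exp (- l * u) \<partial>lborel)
          \<longlongrightarrow> (\<integral>u. g u * u * exp (- l * u) \<partial>lborel)) F"
begin

lemma tendsto_laplace_functional_polynomial:
  "((\<lambda>r. laplace_functional (G r) (\<lambda>y. \<Sum>i\<le>n. a i * y ^ i))
      \<longlongrightarrow> laplace_functional g (\<lambda>y. \<Sum>i\<le>n. a i * y ^ i)) F"
proof -
  have "((\<lambda>r. \<Sum>i\<le>n. a i * laplace_functional (G r) (\<lambda>y. y ^ i))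
      \<longlongrightarrow> (\<Sum>i\<le>n. a i * laplace_functional g (\<lambda>y. y ^ i))) F"
    unfolding laplace_functional_monomial by (intro tendsto_sum tendsto_mult tendsto_const tendsto_laplace) simp
  moreover have "\<forall>\<^sub>F r in F. (\<Sum>i\<le>n. a i * laplace_functional (G r) (\<lambda>y. y ^ i))
      = laplace_functional (G r) (\<lambda>y. \<Sum>i\<le>n. a i * y ^ i)"
    using eventually_admissible by eventually_elim (rule laplace_functional_polynomial[symmetric])
  ultimately show ?thesis
    by (simp only: laplace_functional_polynomial[OF admissible_g] Lim_transform_eventually)
qed

lemma tendsto_laplace_functional:
  assumes c: "continuous_on {0..1} c" "c \<in> borel_measurable borel"
  shows "((\<lambda>r. laplace_functional (G r) c) \<longlongrightarrow> laplace_functional g c) F"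
proof (rule tendstoI)
  fix e :: real assume e: "e > 0"
  obtain B where B: "\<forall>y\<in>{0..1}. \<bar>c y\<bar> \<le> B"
    using compact_imp_bounded[OF compact_continuous_image[OF c(1) compact_Icc]]
    by (auto simp: bounded_iff)
  define M where "M = laplace_functional g (\<lambda>_. 1)"
  have M: "M \<ge> 0"
    unfolding M_def by (rule laplace_functional_nonneg[OF admissible_g]) simp
  define d where "d = e / (4 * (M + 1))"
  have d: "d > 0" "d * (M + 1) = e / 4"
    unfolding d_def using e M by (simp_all add: field_simps)
  obtain P where P: "real_polynomial_function P" "\<And>y. y \<in> {0..1} \<Longrightarrow> \<bar>c y - P y\<bar> < d"
    using Stone_Weierstrass_real_polynomial_function[OF compact_Icc c(1) d(1)] by blast
  obtain a n where P_eq: "P = (\<lambda>y. \<Sum>i\<le>n. a i * y ^ i)"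
    using real_polynomial_function_imp_sum[OF P(1)] by blast
  have P_meas: "P \<in> borel_measurable borel"
    unfolding P_eq by measurable
  have cP: "\<forall>y\<in>{0..1}. \<bar>c y - P y\<bar> \<le> d"
    using P(2) by (simp add: less_imp_le)
  have PB: "\<forall>y\<in>{0..1}. \<bar>P y\<bar> \<le> B + d"
    using B cP by force
  have "((\<lambda>r. laplace_functional (G r) (\<lambda>_. 1)) \<longlongrightarrow> M) F"
    using tendsto_laplace[of 1] by (simp add: M_def laplace_functional_def)
  then have "\<forall>\<^sub>F r in F. laplace_functional (G r) (\<lambda>_. 1) < M + 1"
    by (rule order_tendstoD) simp
  moreover have "\<forall>\<^sub>F r in F. dist (laplace_functional (G r) P) (laplace_functional g P) < e / 4"
    using tendstoD[OF tendsto_laplace_functional_polynomial[of a n], of "e / 4"] e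
    unfolding P_eq by simp
  ultimately show "\<forall>\<^sub>F r in F. dist (laplace_functional (G r) c) (laplace_functional g c) < e"
    using eventually_admissible
  proof eventually_elim
    case (elim r)
    have "\<bar>laplace_functional (G r) c - laplace_functional (G r) P\<bar> \<le> d * laplace_functional (G r) (\<lambda>_. 1)"
      by (rule laplace_functional_diff_le[OF elim(3) c(2) P_meas B PB cP])
    also have "\<dots> \<le> d * (M + 1)"
      using elim(1) d by simp
    finally have 1: "\<bar>laplace_functional (G r) c - laplace_functional (G r) P\<bar> \<le> e / 4"
      using d by simp
    have "\<bar>laplace_functional g c - laplace_functional g P\<bar> \<le> d * M"
      unfolding M_def by (rule laplace_functional_diff_le[OF admissible_g c(2) P_meas B PB cP])
    also have "\<dots> \<le> d * (M + 1)"
      using d by simp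
    finally have 2: "\<bar>laplace_functional g c - laplace_functional g P\<bar> \<le> e / 4"
      using d by simp
    show ?case
      using 1 2 elim(2) unfolding dist_real_def by linarith
  qed
qed

lemma tendsto_laplace_functional_exp_tent:
  "((\<lambda>r. laplace_functional (G r) (exp_tent a b)) \<longlongrightarrow> laplace_functional g (exp_tent a b)) F"
  by (rule tendsto_laplace_functional[OF continuous_on_subset[OF continuous_on_exp_tent]]) auto

lemma g_near_1:
  assumes e: "e > 0"
  obtains s where "s > 0" "\<And>x. \<bar>x - 1\<bar> < s \<Longrightarrow> \<bar>g x - g 1\<bar> < e"
proof -
  obtain s where "s > 0" "\<And>x. x \<noteq> 1 \<Longrightarrow> \<bar>x - 1\<bar> < s \<Longrightarrow> \<bar>g x - g 1\<bar> < e"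
    using isCont_g e unfolding isCont_def LIM_eq real_norm_def by blast
  then show ?thesis
    using e that by (metis abs_zero diff_self)
qed

text \<open>On \<open>[1, b]\<close> and \<open>[a, 1]\<close> the antitone \<open>G r\<close> lies below resp. above \<open>G r 1\<close>, so the
  converging tent averages squeeze \<open>G r 1\<close>; continuity of \<open>g\<close> at \<open>1\<close> lets the tents shrink.\<close>
lemma eventually_less_G_1:
  assumes y: "y < g 1"
  shows "\<forall>\<^sub>F r in F. y < G r 1"
proof -
  obtain s where s: "s > 0" "\<And>x. \<bar>x - 1\<bar> < s \<Longrightarrow> \<bar>g x - g 1\<bar> < g 1 - y"
    using g_near_1[of "g 1 - y"] y by auto
  define b where "b = 1 + min s 1 / 2"
  have b: "1 < b" "\<bar>b - 1\<bar> < s"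
    using s(1) by (auto simp: b_def)
  then have gb: "y < g b" "tent_weight 1 b > 0"
    using s(2)[of b] by (auto intro!: tent_weight_pos)
  have "g b * tent_weight 1 b \<le> laplace_functional g (exp_tent 1 b)"
    using b(1) antimono_g
    by (intro laplace_functional_exp_tent_ge[OF admissible_g]) (auto simp: monotone_on_def)
  then have "y * tent_weight 1 b < laplace_functional g (exp_tent 1 b)"
    using gb by (meson less_le_trans mult_strict_right_mono)
  from order_tendstoD(1)[OF tendsto_laplace_functional_exp_tent this]
  show ?thesis
    using eventually_admissible eventually_antimono
  proof eventually_elim
    case (elim r)
    have "laplace_functional (G r) (exp_tent 1 b) \<le> G r 1 * tent_weight 1 b"
      using b(1) elim(3) by (intro laplace_functional_exp_tent_le[OF elim(2)]) (auto simp: monotone_on_def)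
    then show ?case
      using elim(1) gb(2) by (meson less_le_trans mult_less_cancel_right_pos)
  qed
qed

lemma eventually_G_1_less:
  assumes y: "g 1 < y"
  shows "\<forall>\<^sub>F r in F. G r 1 < y"
proof -
  obtain s where s: "s > 0" "\<And>x. \<bar>x - 1\<bar> < s \<Longrightarrow> \<bar>g x - g 1\<bar> < y - g 1"
    using g_near_1[of "y - g 1"] y by auto
  define a where "a = 1 - min s 1 / 2"
  have a: "0 < a" "a < 1" "\<bar>a - 1\<bar> < s"
    using s(1) by (auto simp: a_def)
  then have ga: "g a < y" "tent_weight a 1 > 0"
    using s(2)[of a] by (auto intro!: tent_weight_pos)
  have "laplace_functional g (exp_tent a 1) \<le> g a * tent_weight a 1"
    using a(1,2) antimono_g
    by (intro laplace_functional_exp_tent_le[OF admissible_g]) (auto simp: monotone_on_def)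
  then have "laplace_functional g (exp_tent a 1) < y * tent_weight a 1"
    using ga by (meson le_less_trans mult_strict_right_mono)
  from order_tendstoD(2)[OF tendsto_laplace_functional_exp_tent this]
  show ?thesis
    using eventually_admissible eventually_antimono
  proof eventually_elim
    case (elim r)
    have "G r 1 * tent_weight a 1 \<le> laplace_functional (G r) (exp_tent a 1)"
      using a(1,2) elim(3) by (intro laplace_functional_exp_tent_ge[OF elim(2)]) (auto simp: monotone_on_def)
    then show ?case
      using elim(1) ga(2) by (meson le_less_trans mult_less_cancel_right_pos)
  qed
qed

theorem tendsto_at_1: "((\<lambda>r. G r 1) \<longlongrightarrow> g 1) F"
  by (rule order_tendstoI) (fact eventually_less_G_1 eventually_G_1_less)+

end

section \<open>Power densities\<close>

lemma nn_integral_powr_exp: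
  assumes s: "s > 0" and l: "l > 0"
  shows "(\<integral>\<^sup>+x. ennreal (indicator {0<..} x * x powr (s - 1) * exp (- l * x)) \<partial>lborel)
    = ennreal (Gamma s / l powr s)"
proof -
  define f where "f x = indicator {0<..} x * x powr (s - 1) * exp (- l * x)" for x :: real
  have f_scale: "indicator {0<..} (l * x) * (l * x) powr (s - 1) * exp (- (l * x)) = l powr (s - 1) * f x" for x
    using l by (cases "x > 0") (simp_all add: f_def powr_mult zero_less_mult_iff)
  have "ennreal (Gamma s) = (\<integral>\<^sup>+t. ennreal (indicator {0..} t * t powr (s - 1) / exp t) \<partial>lborel)"
    using nn_integral_has_integral_lebesgue[OF _ Gamma_integral_real[OF s]] by simp
  also have "\<dots> = (\<integral>\<^sup>+t. ennreal (indicator {0<..} t * t powr (s - 1) * exp (- t)) \<partial>lborel)"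
    by (intro nn_integral_cong) (simp add: indicator_def exp_minus field_simps)
  also have "\<dots> = ennreal \<bar>l\<bar> *
      (\<integral>\<^sup>+x. ennreal (indicator {0<..} (0 + l * x) * (0 + l * x) powr (s - 1) * exp (- (0 + l * x))) \<partial>lborel)"
    by (rule nn_integral_real_affine) (use l in auto)
  also have "\<dots> = ennreal l * (\<integral>\<^sup>+x. ennreal (l powr (s - 1) * f x) \<partial>lborel)"
    using l by (simp only: f_scale add_0 abs_of_pos)
  also have "\<dots> = ennreal l * (ennreal (l powr (s - 1)) * (\<integral>\<^sup>+x. ennreal (f x) \<partial>lborel))"
    using l by (simp add: ennreal_mult' nn_integral_cmult f_def)
  also have "\<dots> = ennreal (l powr s) * (\<integral>\<^sup>+x. ennreal (f x) \<partial>lborel)"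
    using l by (simp add: mult.assoc[symmetric] ennreal_mult'[symmetric] powr_diff)
  finally have Gamma_eq: "ennreal (Gamma s) = ennreal (l powr s) * (\<integral>\<^sup>+x. ennreal (f x) \<partial>lborel)" .
  have one: "1 / l powr s * l powr s = 1"
    using l by simp
  have "(\<integral>\<^sup>+x. ennreal (f x) \<partial>lborel) = ennreal (1 / l powr s * l powr s) * (\<integral>\<^sup>+x. ennreal (f x) \<partial>lborel)"
    unfolding one by simp
  also have "\<dots> = ennreal (1 / l powr s) * ennreal (Gamma s)"
    using l by (subst ennreal_mult') (simp_all add: Gamma_eq mult.assoc)
  also have "\<dots> = ennreal (Gamma s / l powr s)"
    using l s by (simp add: ennreal_mult'[symmetric])
  finally show ?thesis
    by (simp add: f_def)
qed

definition power_density :: "real \<Rightarrow> real \<Rightarrow> real" where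
  "power_density \<gamma> u = indicator {0<..} u * u powr (- \<gamma>) / Gamma (2 - \<gamma>)"

lemma has_bochner_integral_power_density:
  assumes "\<gamma> < 2" "l > 0"
  shows "has_bochner_integral lborel (\<lambda>u. power_density \<gamma> u * u * exp (- l * u)) (l powr (\<gamma> - 2))"
proof -
  have Gamma: "Gamma (2 - \<gamma>) > 0" using assms by simp
  have eq: "power_density \<gamma> u * u * exp (- l * u)
      = (1 / Gamma (2 - \<gamma>)) * (indicator {0<..} u * u powr ((2 - \<gamma>) - 1) * exp (- l * u))" for u
    by (cases "u > 0") (auto simp: power_density_def powr_diff powr_minus field_simps)
  let ?k = "\<lambda>u. indicator {0<..} u * u powr ((2 - \<gamma>) - 1) * exp (- l * u)"
  have "(\<integral>\<^sup>+u. ennreal (power_density \<gamma> u * u * exp (- l * u)) \<partial>lborel)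
      = (\<integral>\<^sup>+u. ennreal (1 / Gamma (2 - \<gamma>)) * ennreal (?k u) \<partial>lborel)"
    unfolding eq using Gamma by (intro nn_integral_cong ennreal_mult') simp
  also have "\<dots> = ennreal (1 / Gamma (2 - \<gamma>)) * (\<integral>\<^sup>+u. ennreal (?k u) \<partial>lborel)"
    by (rule nn_integral_cmult) measurable
  also have "\<dots> = ennreal (1 / Gamma (2 - \<gamma>) * (Gamma (2 - \<gamma>) / l powr (2 - \<gamma>)))"
    using assms Gamma nn_integral_powr_exp[of "2 - \<gamma>" l] by (simp add: ennreal_mult'[symmetric])
  also have "1 / Gamma (2 - \<gamma>) * (Gamma (2 - \<gamma>) / l powr (2 - \<gamma>)) = l powr (\<gamma> - 2)"
    using Gamma by (simp add: powr_minus_divide[symmetric])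
  finally have "(\<integral>\<^sup>+u. ennreal (power_density \<gamma> u * u * exp (- l * u)) \<partial>lborel) = ennreal (l powr (\<gamma> - 2))" .
  moreover have "AE u in lborel. 0 \<le> power_density \<gamma> u * u * exp (- l * u)"
    using Gamma by (intro AE_I2) (simp add: power_density_def indicator_def)
  moreover have "(\<lambda>u. power_density \<gamma> u * u * exp (- l * u)) \<in> borel_measurable lborel"
    unfolding power_density_def by measurable
  ultimately show ?thesis
    by (simp add: has_bochner_integral_iff nn_integral_eq_integrable)
qed

lemma admissible_power_density:
  assumes "\<gamma> < 2"
  shows "admissible_density (power_density \<gamma>)"
proof -
  have "power_density \<gamma> \<in> borel_measurable borel"
    unfolding power_density_def by measurable
  then show ?thesis
    unfolding admissible_density_def
    using assms has_bochner_integral_power_density[OF assms]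
    by (auto simp: power_density_def has_bochner_integral_iff)
qed

lemma antimono_power_density:
  assumes "0 \<le> \<gamma>" "\<gamma> < 2"
  shows "antimono_on {0<..} (power_density \<gamma>)"
proof (rule monotone_onI)
  fix u v :: real assume "u \<in> {0<..}" "v \<in> {0<..}" "u \<le> v"
  then show "power_density \<gamma> v \<le> power_density \<gamma> u"
    using assms by (simp add: power_density_def divide_right_mono powr_mono2' less_imp_le)
qed

lemma isCont_power_density: "isCont (power_density \<gamma>) 1"
proof -
  have "continuous_on {0<..} (\<lambda>u. u powr (- \<gamma>) * inverse (Gamma (2 - \<gamma>)))"
    by (intro continuous_intros) auto
  then have "continuous_on {0<..} (power_density \<gamma>)"
    by (rule continuous_on_cong[THEN iffD1, rotated 2]) (auto simp: power_density_def divide_inverse)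
  then show ?thesis
    using continuous_on_eq_continuous_at[of "{0<..}" "power_density \<gamma>"] by simp
qed

section \<open>Tail asymptotics\<close>

lemma regvar_at_0_inverse:
  assumes "regvar_at_0 H \<gamma>" "c > 0"
  shows "((\<lambda>r. H (c / r) / H (1 / r)) \<longlongrightarrow> c powr \<gamma>) at_top"
proof -
  have "((\<lambda>s. H (c * s) / H s) \<longlongrightarrow> c powr \<gamma>) (at_right 0)"
    using assms unfolding regvar_at_0_def by blast
  from filterlim_compose[OF this filterlim_inverse_at_right_top] show ?thesis
    by (simp add: divide_inverse)
qed

lemma regvar_at_top_inverse:
  assumes "regvar_at_top H \<gamma>" "c > 0"
  shows "((\<lambda>r. H (c / r) / H (1 / r)) \<longlongrightarrow> c powr \<gamma>) (at_right 0)"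
proof -
  have "((\<lambda>s. H (c * s) / H s) \<longlongrightarrow> c powr \<gamma>) at_top"
    using assms unfolding regvar_at_top_def by blast
  from filterlim_compose[OF this filterlim_inverse_at_top_right] show ?thesis
    by (simp add: divide_inverse)
qed

context levy
begin

definition rescaled_tail :: "(real \<Rightarrow> real) \<Rightarrow> real \<Rightarrow> real \<Rightarrow> real" where
  "rescaled_tail H r u = tail (r * u) / H (1 / r)"

lemma has_bochner_integral_rescaled_tail:
  assumes r: "r > 0" and l: "l > 0" and H_eq: "H (l / r) = levy_H (l / r)"
  shows "has_bochner_integral lborel (\<lambda>u. rescaled_tail H r u * u * exp (- l * u)) (H (l / r) / H (1 / r) / l\<^sup>2)"
proof -
  have "has_bochner_integral lborel
      (\<lambda>u. (1 / (l\<^sup>2 * H (1 / r))) * (tail (r * u) * (l\<^sup>2 * u * exp (- l * u))))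
      ((1 / (l\<^sup>2 * H (1 / r))) * levy_H (l / r))"
    by (intro has_bochner_integral_mult_right has_bochner_integral_tail_kernel r l)
  moreover have "(\<lambda>u. (1 / (l\<^sup>2 * H (1 / r))) * (tail (r * u) * (l\<^sup>2 * u * exp (- l * u))))
      = (\<lambda>u. rescaled_tail H r u * u * exp (- l * u))"
    using l by (auto simp: rescaled_tail_def field_simps power2_eq_square)
  moreover have "(1 / (l\<^sup>2 * H (1 / r))) * levy_H (l / r) = H (l / r) / H (1 / r) / l\<^sup>2"
    using H_eq by (simp add: field_simps)
  ultimately show ?thesis
    by (simp only:)
qed

lemma admissible_rescaled_tail:
  assumes r: "r > 0" and H_pos: "H (1 / r) > 0" and H_eq: "\<And>l. l > 0 \<Longrightarrow> H (l / r) = levy_H (l / r)"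
  shows "admissible_density (rescaled_tail H r)"
proof -
  have "rescaled_tail H r \<in> borel_measurable borel"
    unfolding rescaled_tail_def by measurable
  moreover have "tail (r * u) = 0" if "u \<le> 0" for u
    using r that by (simp add: tail_nonpos mult_nonneg_nonpos)
  ultimately show ?thesis
    using has_bochner_integral_rescaled_tail[OF r] H_eq H_pos
    by (auto simp: admissible_density_def rescaled_tail_def tail_nonneg has_bochner_integral_iff)
qed

lemma antimono_rescaled_tail:
  assumes r: "r > 0" and H_pos: "H (1 / r) > 0"
  shows "antimono_on {0<..} (rescaled_tail H r)"
  using r H_pos monotone_onD[OF antimono_on_tail]
  by (auto intro!: monotone_onI divide_right_mono simp: rescaled_tail_def)

lemma tendsto_tail_over_H:
  fixes H :: "real \<Rightarrow> real" and F :: "real filter"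
  assumes \<gamma>: "0 \<le> \<gamma>" "\<gamma> < 2"
    and H_pos: "\<And>l. l > 0 \<Longrightarrow> H l > 0" and H_eq: "\<And>l. l > 0 \<Longrightarrow> H l = levy_H l"
    and F: "\<forall>\<^sub>F r in F. r > 0"
    and H_ratio: "\<And>c. c > 0 \<Longrightarrow> ((\<lambda>r. H (c / r) / H (1 / r)) \<longlongrightarrow> c powr \<gamma>) F"
  shows "((\<lambda>r. measure mu {r<..} / (H (1 / r) / Gamma (2 - \<gamma>))) \<longlongrightarrow> 1) F"
proof -
  interpret monotone_tauberian F "rescaled_tail H" "power_density \<gamma>"
  proof
    show "\<forall>\<^sub>F r in F. admissible_density (rescaled_tail H r)"
      using F by eventually_elim (intro admissible_rescaled_tail H_eq, auto simp: H_pos)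
    show "\<forall>\<^sub>F r in F. antimono_on {0<..} (rescaled_tail H r)"
      using F by eventually_elim (intro antimono_rescaled_tail, auto simp: H_pos)
    show "((\<lambda>r. \<integral>u. rescaled_tail H r u * u * exp (- l * u) \<partial>lborel)
        \<longlongrightarrow> (\<integral>u. power_density \<gamma> u * u * exp (- l * u) \<partial>lborel)) F" if l: "l > 0" for l
    proof -
      have "((\<lambda>r. H (l / r) / H (1 / r) / l\<^sup>2) \<longlongrightarrow> l powr \<gamma> / l\<^sup>2) F"
        by (intro tendsto_divide H_ratio l tendsto_const) (use l in auto)
      moreover have "\<forall>\<^sub>F r in F. H (l / r) / H (1 / r) / l\<^sup>2 = (\<integral>u. rescaled_tail H r u * u * exp (- l * u) \<partial>lborel)"
        using F by eventually_elim (use has_bochner_integral_rescaled_tail H_eq l in \<open>simp add: has_bochner_integral_iff\<close>)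
      moreover have "l powr \<gamma> / l\<^sup>2 = (\<integral>u. power_density \<gamma> u * u * exp (- l * u) \<partial>lborel)"
        using has_bochner_integral_power_density[OF \<gamma>(2) l] l
        by (simp add: has_bochner_integral_iff powr_diff)
      ultimately show ?thesis
        by (simp add: Lim_transform_eventually)
    qed
  qed (use admissible_power_density antimono_power_density isCont_power_density \<gamma> in auto)
  have "((\<lambda>r. Gamma (2 - \<gamma>) * rescaled_tail H r 1) \<longlongrightarrow> Gamma (2 - \<gamma>) * power_density \<gamma> 1) F"
    by (intro tendsto_mult tendsto_const tendsto_at_1)
  moreover have "Gamma (2 - \<gamma>) * power_density \<gamma> 1 = 1"
  proof -
    have "Gamma (2 - \<gamma>) > 0"
      using \<gamma> by (intro Gamma_real_pos) simp
    then show ?thesis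
      by (simp add: power_density_def)
  qed
  moreover have "\<forall>\<^sub>F r in F. Gamma (2 - \<gamma>) * rescaled_tail H r 1 = measure mu {r<..} / (H (1 / r) / Gamma (2 - \<gamma>))"
    using F by eventually_elim (simp add: rescaled_tail_def tail_def)
  ultimately show ?thesis
    by (simp add: Lim_transform_eventually)
qed

end

theorem proposition2p2:
  fixes b \<gamma> :: real and mu :: "real measure" and H :: "real \<Rightarrow> real"
  assumes "b \<ge> 0" and "levy_measure mu"
    and "\<gamma> \<in> {0..1}"
    and "\<And>lam. lam > 0 \<Longrightarrow> H lam = laplace_exponent b mu lam
                 - lam * deriv (laplace_exponent b mu) lam"
  shows "(regvar_at_0 H \<gamma> \<longrightarrow>
            (\<lambda>r. measure mu {r<..}) \<sim>[at_top] (\<lambda>r. H (1 / r) / Gamma (2 - \<gamma>)))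
       \<and> (regvar_at_top H \<gamma> \<longrightarrow>
            (\<lambda>r. measure mu {r<..}) \<sim>[at_right 0] (\<lambda>r. H (1 / r) / Gamma (2 - \<gamma>)))"
proof -
  interpret levy mu by (rule levy.intro) fact
  have H_eq: "H l = levy_H l" if "l > 0" for l
    using assms(4)[OF that] laplace_exponent_minus_deriv[OF that, of b] by simp
  have \<gamma>: "0 \<le> \<gamma>" "\<gamma> < 2"
    using assms(3) by auto
  show ?thesis
  proof (intro conjI impI)
    assume "regvar_at_0 H \<gamma>"
    then show "(\<lambda>r. measure mu {r<..}) \<sim>[at_top] (\<lambda>r. H (1 / r) / Gamma (2 - \<gamma>))"
      by (intro asymp_equivI' tendsto_tail_over_H[OF \<gamma> _ H_eq] regvar_at_0_inverse)
         (auto simp: regvar_at_0_def)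
  next
    assume "regvar_at_top H \<gamma>"
    then show "(\<lambda>r. measure mu {r<..}) \<sim>[at_right 0] (\<lambda>r. H (1 / r) / Gamma (2 - \<gamma>))"
      by (intro asymp_equivI' tendsto_tail_over_H[OF \<gamma> _ H_eq] regvar_at_top_inverse)
         (auto simp: regvar_at_top_def eventually_at_right_less)
  qed
qed

end
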